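(* Let $V$ be a finite-dimensional braided vector space of diagonal type over a field $F$ of characteristic zero and $\mathfrak B(V)$ its Nichols algebra. If $\Delta(\mathfrak B(V))$ is not an arithmetic root system (i.e. is infinite), then $\dim\mathfrak L(V)_L=\infty$ and $\dim\mathfrak L(V)_R=\infty$.
   Context: $V$ has basis $x_1<\dots<x_n$, braiding $C(x_i\otimes x_j)=p_{i,j}x_j\otimes x_i$; $\mathfrak B(V)=T(V)/\bigoplus_{m\ge2}\ker S_m$ is $\mathbb Z^n$-graded by $\deg x_i=e_i$. Words are ordered lexicographically; a word $u$ is Lyndon if $|u|=1$ or $u<u_2u_1$ for every factorization $u=u_1u_2$ into nonempty words. A word is standard with respect to $\mathfrak B(V)$ if in $\mathfrak B(V)$ it is not a linear combination of strictly greater words (of the same degree). $\Delta^+(\mathfrak B(V))$ is the set of degrees of words that are both Lyndon and standard (equivalently, degrees of Kharchenko's hard super-letters), $\Delta(\mathfrak B(V))=\Delta^+\cup(-\Delta^+)$; it is an arithmetic root system if it is finite. With $p_{u,v}=\prod p_{i,j}^{a_ib_j}$ for $\deg u=\sum a_ie_i,\deg v=\sum b_je_j$, $\mathfrak L(V)_L$ (resp. $\mathfrak L(V)_R$) is the Lie subalgebra of $\mathfrak B(V)$ generated by $V$ under $[u,v]_L=p_{v,u}uv-p_{u,v}vu$ (resp. $[u,v]_R=p_{u,v}uv-p_{v,u}vu$). *)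

theory Defs
  imports "HOL-Combinatorics.Permutations"
begin

text \<open>Letters x_1 < ... < x_n are encoded as natural numbers 0 < ... < n-1.
  Words are lists of letters. Elements of the tensor algebra T(V) are
  finitely supported coefficient functions on words over the alphabet.\<close>

type_synonym 'a tens = "nat list \<Rightarrow> 'a"

definition tensor_elem :: "nat \<Rightarrow> 'a::zero tens \<Rightarrow> bool" where
  "tensor_elem n f \<longleftrightarrow> finite {w. f w \<noteq> 0} \<and> (\<forall>w. f w \<noteq> 0 \<longrightarrow> set w \<subseteq> {..<n})"

definition word :: "nat list \<Rightarrow> 'a::{zero,one} tens" where
  "word u = (\<lambda>w. if w = u then 1 else 0)"

text \<open>Quantum symmetrizer S_m (all m at once; it preserves length). For a word
  w = x_{i_0}...x_{i_{m-1}} and a permutation s of {0..<m}, the braid lift of s sends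
  w to the word w' with w' ! (s a) = w ! a, multiplied by the product of p (w!a) (w!b)
  over all pairs a < b with s b < s a. Below, (symm p f) w' collects all contributions
  landing on w'.\<close>

definition symm :: "(nat \<Rightarrow> nat \<Rightarrow> 'a::field) \<Rightarrow> 'a tens \<Rightarrow> 'a tens" where
  "symm p f w' = (\<Sum>s\<in>{s. s permutes {0..<length w'}}.
      f (map (\<lambda>a. w' ! s a) [0..<length w'])
      * (\<Prod>(a,b)\<in>{(a,b). a < b \<and> b < length w' \<and> s b < s a}. p (w' ! s a) (w' ! s b)))"

definition nichols_ideal :: "nat \<Rightarrow> (nat \<Rightarrow> nat \<Rightarrow> 'a::field) \<Rightarrow> 'a tens set" where
  "nichols_ideal n p = {f. tensor_elem n f \<and> (\<forall>w. length w \<le> 1 \<longrightarrow> f w = 0)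
                             \<and> (\<forall>w. symm p f w = 0)}"

definition word_less :: "nat list \<Rightarrow> nat list \<Rightarrow> bool" where
  "word_less u v \<longleftrightarrow> (u, v) \<in> lexord {(a, b). a < b}"

definition lyndon :: "nat list \<Rightarrow> bool" where
  "lyndon u \<longleftrightarrow> u \<noteq> [] \<and> (length u = 1 \<or>
     (\<forall>u1 u2. u = u1 @ u2 \<and> u1 \<noteq> [] \<and> u2 \<noteq> [] \<longrightarrow> word_less u (u2 @ u1)))"

definition standard :: "nat \<Rightarrow> (nat \<Rightarrow> nat \<Rightarrow> 'a::field) \<Rightarrow> nat list \<Rightarrow> bool" where
  "standard n p u \<longleftrightarrow> \<not> (\<exists>c :: nat list \<Rightarrow> 'a.
      (\<lambda>w. word u w - (if mset w = mset u \<and> word_less u w then c w else 0))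
        \<in> nichols_ideal n p)"

definition deg :: "nat list \<Rightarrow> nat \<Rightarrow> int" where
  "deg u = (\<lambda>i. int (count (mset u) i))"

definition Delta_plus :: "nat \<Rightarrow> (nat \<Rightarrow> nat \<Rightarrow> 'a::field) \<Rightarrow> (nat \<Rightarrow> int) set" where
  "Delta_plus n p = deg ` {u. set u \<subseteq> {..<n} \<and> lyndon u \<and> standard n p u}"

definition Delta :: "nat \<Rightarrow> (nat \<Rightarrow> nat \<Rightarrow> 'a::field) \<Rightarrow> (nat \<Rightarrow> int) set" where
  "Delta n p = Delta_plus n p \<union> (\<lambda>d i. - d i) ` Delta_plus n p"

definition pw :: "(nat \<Rightarrow> nat \<Rightarrow> 'a::comm_monoid_mult) \<Rightarrow> nat list \<Rightarrow> nat list \<Rightarrow> 'a" where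
  "pw p u v = prod_list [p a b. a \<leftarrow> u, b \<leftarrow> v]"

text \<open>Bilinear extensions of [u,v]_L = p_{v,u} uv - p_{u,v} vu and
  [u,v]_R = p_{u,v} uv - p_{v,u} vu from words to T(V).\<close>

definition bracketL :: "(nat \<Rightarrow> nat \<Rightarrow> 'a::field) \<Rightarrow> 'a tens \<Rightarrow> 'a tens \<Rightarrow> 'a tens" where
  "bracketL p f g w = (\<Sum>k\<le>length w. pw p (drop k w) (take k w) *
       (f (take k w) * g (drop k w) - g (take k w) * f (drop k w)))"

definition bracketR :: "(nat \<Rightarrow> nat \<Rightarrow> 'a::field) \<Rightarrow> 'a tens \<Rightarrow> 'a tens \<Rightarrow> 'a tens" where
  "bracketR p f g w = (\<Sum>k\<le>length w. pw p (take k w) (drop k w) *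
       (f (take k w) * g (drop k w) - g (take k w) * f (drop k w)))"

text \<open>Preimage in T(V) of the Lie subalgebra generated by V: smallest subspace
  containing x_1,...,x_n and closed under the bracket.\<close>

inductive_set lie_closure :: "('a::field tens \<Rightarrow> 'a tens \<Rightarrow> 'a tens) \<Rightarrow> nat \<Rightarrow> 'a tens set"
  for br n where
  gen: "i < n \<Longrightarrow> word [i] \<in> lie_closure br n"
| add: "f \<in> lie_closure br n \<Longrightarrow> g \<in> lie_closure br n \<Longrightarrow> (\<lambda>w. f w + g w) \<in> lie_closure br n"
| smult: "f \<in> lie_closure br n \<Longrightarrow> (\<lambda>w. c * f w) \<in> lie_closure br n"
| br: "f \<in> lie_closure br n \<Longrightarrow> g \<in> lie_closure br n \<Longrightarrow> br f g \<in> lie_closure br n"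

definition LieL :: "nat \<Rightarrow> (nat \<Rightarrow> nat \<Rightarrow> 'a::field) \<Rightarrow> 'a tens set" where
  "LieL n p = lie_closure (bracketL p) n"

definition LieR :: "nat \<Rightarrow> (nat \<Rightarrow> nat \<Rightarrow> 'a::field) \<Rightarrow> 'a tens set" where
  "LieR n p = lie_closure (bracketR p) n"

text \<open>The image of S \<subseteq> T(V) in B(V) = T(V)/I is finite-dimensional: it is
  spanned modulo I by finitely many elements of T(V).\<close>

definition fin_dim_mod :: "nat \<Rightarrow> (nat \<Rightarrow> nat \<Rightarrow> 'a::field) \<Rightarrow> 'a tens set \<Rightarrow> bool" where
  "fin_dim_mod n p S \<longleftrightarrow> (\<exists>gs :: 'a tens list. (\<forall>g\<in>set gs. tensor_elem n g) \<and>
      (\<forall>f\<in>S. \<exists>c :: nat \<Rightarrow> 'a.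
          (\<lambda>w. f w - (\<Sum>j<length gs. c j * (gs ! j) w)) \<in> nichols_ideal n p))"

end

theory Submission
  imports Defs "HOL-Library.List_Lexorder"
begin

text \<open>A Lyndon word u of length at least 2 factors as u = w v with w, v Lyndon and
  w v < v w (take v to be the least proper suffix). If f and g have leading (least) words w
  and v, their twisted commutator has leading word w v, because the product terms g f only
  contribute words \<ge> v w > w v. By induction every Lyndon word is the leading word of some
  element of the Lie algebra generated by V. If the image of that Lie algebra in B(V) were
  spanned by finitely many elements, their supports would involve only finitely many degrees;
  as Delta_plus is infinite there is a standard Lyndon word u of some other degree. Projecting
  the congruence f \<equiv> \<Sigma> c_j g_j onto the degree of u puts the Lie element f with
  leading word u into the Nichols ideal, so u is a combination of greater words in B(V),
  contradicting standardness.\<close>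

lemma append_less_append_imp_less:
  fixes x y :: "'a::linorder list"
  shows "take (length y) x \<noteq> y \<Longrightarrow> x @ z < y @ z' \<Longrightarrow> x < y"
proof (induction y arbitrary: x)
  case (Cons b y)
  then show ?case by (cases x) auto
qed simp

lemma append_less_append_iff: "x @ y < x @ z \<longleftrightarrow> y < (z::'a::linorder list)"
  by (induction x) auto

lemma less_imp_append_less_append:
  fixes a b :: "'a::linorder list"
  shows "length a = length b \<Longrightarrow> a < b \<Longrightarrow> a @ c < b @ d"
proof (induction a arbitrary: b)
  case (Cons x a)
  then show ?case by (cases b) auto
qed simp

lemma append_le_append_iff: "x @ y \<le> x @ z \<longleftrightarrow> y \<le> (z::'a::linorder list)"
  by (simp add: order.order_iff_strict append_less_append_iff)

lemma append_le_append_same_length: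
  fixes a b :: "'a::linorder list"
  assumes "length a = length b" "a \<le> b" "c \<le> d"
  shows "a @ c \<le> b @ d"
proof (cases "a = b")
  case True
  then show ?thesis using assms(3) by (simp add: append_le_append_iff)
next
  case False
  then have "a < b" using assms(2) by simp
  then show ?thesis using less_imp_append_less_append[OF assms(1)] less_imp_le by blast
qed

lemma less_imp_less_append:
  fixes u s :: "'a::linorder list"
  shows "length s \<le> length u \<Longrightarrow> u < s \<Longrightarrow> u < s @ r"
proof (induction u arbitrary: s)
  case (Cons x u)
  then show ?case by (cases s) auto
qed simp

lemma word_less_iff_less: "word_less u v \<longleftrightarrow> u < v"
  by (simp add: word_less_def list_less_def)

lemma lyndon_less_rotation:
  assumes "lyndon (r @ s)" "r \<noteq> []" "s \<noteq> []"
  shows "r @ s < s @ r"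
proof -
  have "length (r @ s) \<noteq> 1" using assms(2,3) by (cases r) auto
  then show ?thesis using assms unfolding lyndon_def word_less_iff_less by blast
qed

lemma lyndon_no_border:
  assumes "lyndon u" "u = s @ t" "u = r @ s" "r \<noteq> []" "s \<noteq> []"
  shows False
proof -
  have len: "length t = length r" using assms(2,3) by (metis add_left_imp_eq add.commute length_append)
  then have "t \<noteq> []" using assms(4) by auto
  have "s @ t < s @ r" using lyndon_less_rotation[of r s] assms by simp
  then have "t < r" by (simp add: append_less_append_iff)
  moreover have "r @ s < t @ s" using lyndon_less_rotation[of s t] assms \<open>t \<noteq> []\<close> by simp
  ultimately show False using less_imp_append_less_append[OF len] by (metis less_asym)
qed

lemma lyndon_iff_less_proper_suffixes:
  "lyndon u \<longleftrightarrow> u \<noteq> [] \<and> (\<forall>r s. u = r @ s \<and> r \<noteq> [] \<and> s \<noteq> [] \<longrightarrow> u < s)"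
proof
  assume u: "lyndon u"
  show "u \<noteq> [] \<and> (\<forall>r s. u = r @ s \<and> r \<noteq> [] \<and> s \<noteq> [] \<longrightarrow> u < s)"
  proof (intro conjI allI impI)
    show "u \<noteq> []" using u by (simp add: lyndon_def)
    fix r s assume rs: "u = r @ s \<and> r \<noteq> [] \<and> s \<noteq> []"
    then have "u @ [] < s @ r" using lyndon_less_rotation u by simp
    moreover have "take (length s) u \<noteq> s"
      using lyndon_no_border[OF u _ _] rs by (metis append_take_drop_id)
    ultimately show "u < s" by (rule append_less_append_imp_less[rotated])
  qed
next
  assume "u \<noteq> [] \<and> (\<forall>r s. u = r @ s \<and> r \<noteq> [] \<and> s \<noteq> [] \<longrightarrow> u < s)"
  then show "lyndon u"
    unfolding lyndon_def word_less_iff_less by (metis less_imp_less_append le_add2 length_append)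
qed

lemma lyndon_standard_factorization:
  assumes u: "lyndon u" and len: "2 \<le> length u"
  obtains w v where "u = w @ v" "lyndon w" "lyndon v"
proof -
  have less_suffix: "u < s" if "u = r @ s" "r \<noteq> []" "s \<noteq> []" for r s
    using u that unfolding lyndon_iff_less_proper_suffixes by blast
  define S where "S = {s. \<exists>r. u = r @ s \<and> r \<noteq> [] \<and> s \<noteq> []}"
  have "S \<subseteq> (\<lambda>k. drop k u) ` {..length u}"
  proof
    fix s assume "s \<in> S"
    then obtain r where "u = r @ s" unfolding S_def by blast
    then show "s \<in> (\<lambda>k. drop k u) ` {..length u}" by (intro image_eqI[of _ _ "length r"]) auto
  qed
  then have "finite S" by (rule finite_subset) simp
  moreover have "tl u \<in> S"
    unfolding S_def using len by (intro CollectI exI[of _ "[hd u]"]) (cases u; auto)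
  ultimately have "Min S \<in> S" and min: "\<And>s. s \<in> S \<Longrightarrow> Min S \<le> s"
    using Min_in by auto
  define v where "v = Min S"
  then obtain w where uwv: "u = w @ v" and ne: "w \<noteq> []" "v \<noteq> []"
    using \<open>Min S \<in> S\<close> unfolding S_def by blast
  have "lyndon v"
    unfolding lyndon_iff_less_proper_suffixes
  proof (intro conjI allI impI)
    fix r s assume rs: "v = r @ s \<and> r \<noteq> [] \<and> s \<noteq> []"
    then have "s \<in> S" unfolding S_def using uwv by (intro CollectI exI[of _ "w @ r"]) simp
    moreover have "v \<noteq> s" using rs by auto
    ultimately show "v < s" using min v_def by fastforce
  qed (fact ne)
  moreover have "lyndon w"
    unfolding lyndon_iff_less_proper_suffixes
  proof (intro conjI allI impI)
    fix r s assume rs: "w = r @ s \<and> r \<noteq> [] \<and> s \<noteq> []"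
    then have "w @ v < s @ v" using less_suffix[of r "s @ v"] uwv by simp
    moreover have "take (length s) w \<noteq> s"
    proof
      assume "take (length s) w = s"
      then obtain t where "w = s @ t" by (metis append_take_drop_id)
      then have "t @ v < v" using \<open>w @ v < s @ v\<close> by (simp add: append_less_append_iff)
      moreover have "t @ v \<in> S"
        unfolding S_def using uwv \<open>w = s @ t\<close> rs ne by (intro CollectI exI[of _ s]) auto
      ultimately show False using min v_def by fastforce
    qed
    ultimately show "w < s" by (rule append_less_append_imp_less[rotated])
  qed (fact ne)
  ultimately show thesis using that uwv by blast
qed

definition twisted_commutator ::
    "(nat list \<Rightarrow> nat list \<Rightarrow> 'a::comm_ring) \<Rightarrow> 'a tens \<Rightarrow> 'a tens \<Rightarrow> 'a tens" where
  "twisted_commutator q f g w = (\<Sum>k\<le>length w. q (take k w) (drop k w) *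
       (f (take k w) * g (drop k w) - g (take k w) * f (drop k w)))"

lemma bracketL_eq_twisted_commutator: "bracketL p = twisted_commutator (\<lambda>a b. pw p b a)"
  by (intro ext) (simp add: bracketL_def twisted_commutator_def)

lemma bracketR_eq_twisted_commutator: "bracketR p = twisted_commutator (pw p)"
  by (intro ext) (simp add: bracketR_def twisted_commutator_def)

lemma pw_nonzero:
  assumes "\<forall>i<n. \<forall>j<n. p i j \<noteq> 0" "set a \<subseteq> {..<n}" "set b \<subseteq> {..<n}"
  shows "pw p a b \<noteq> (0::'a::field)"
  using assms unfolding pw_def by (auto simp: prod_list_zero_iff subset_iff)

lemma twisted_commutator_nonzeroE:
  assumes "twisted_commutator q f g w \<noteq> 0"
  obtains a b where "w = a @ b" "f a * g b \<noteq> 0 \<or> g a * f b \<noteq> 0"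
proof -
  obtain k where "f (take k w) * g (drop k w) - g (take k w) * f (drop k w) \<noteq> 0"
    using assms unfolding twisted_commutator_def by (metis (no_types, lifting) mult_zero_right sum.neutral)
  then have "f (take k w) * g (drop k w) \<noteq> 0 \<or> g (take k w) * f (drop k w) \<noteq> 0" by auto
  then show thesis by (rule that[OF append_take_drop_id[symmetric]])
qed

definition leading_word :: "'a::zero tens \<Rightarrow> nat list \<Rightarrow> bool" where
  "leading_word f u \<longleftrightarrow> f u \<noteq> 0 \<and> (\<forall>w. f w \<noteq> 0 \<longrightarrow> mset w = mset u \<and> u \<le> w)"

lemma leading_word_length: "leading_word f u \<Longrightarrow> f w \<noteq> 0 \<Longrightarrow> length w = length u"
  unfolding leading_word_def by (metis size_mset)

lemma leading_word_append_le:
  assumes f: "leading_word f u1" and g: "leading_word g u2" and "f a \<noteq> 0" "g b \<noteq> 0"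
  shows "mset (a @ b) = mset (u1 @ u2) \<and> u1 @ u2 \<le> a @ b"
proof -
  have a: "mset a = mset u1 \<and> u1 \<le> a" using f \<open>f a \<noteq> 0\<close> unfolding leading_word_def by blast
  have b: "mset b = mset u2 \<and> u2 \<le> b" using g \<open>g b \<noteq> 0\<close> unfolding leading_word_def by blast
  have "length u1 = length a" using leading_word_length[OF f \<open>f a \<noteq> 0\<close>] by simp
  then have "u1 @ u2 \<le> a @ b" using a b append_le_append_same_length by blast
  then show ?thesis using a b by simp
qed

lemma twisted_commutator_at_leading_word:
  assumes f: "leading_word f u1" and g: "leading_word g u2" and lt: "u1 @ u2 < u2 @ u1"
  shows "twisted_commutator q f g (u1 @ u2) = q u1 u2 * (f u1 * g u2)"
proof -
  define w where "w = u1 @ u2"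
  have "q (take k w) (drop k w) * (f (take k w) * g (drop k w) - g (take k w) * f (drop k w))
      = (if k = length u1 then q u1 u2 * (f u1 * g u2) else 0)" if "k \<le> length w" for k
  proof -
    have "g (take k w) * f (drop k w) = 0"
    proof (rule ccontr)
      assume "g (take k w) * f (drop k w) \<noteq> 0"
      then have "g (take k w) \<noteq> 0" "f (drop k w) \<noteq> 0" by auto
      then have "u2 @ u1 \<le> take k w @ drop k w" using leading_word_append_le[OF g f] by blast
      then have "u2 @ u1 \<le> u1 @ u2" unfolding append_take_drop_id w_def .
      then show False using lt leD by blast
    qed
    moreover have "f (take k w) = 0" if "k \<noteq> length u1"
      using leading_word_length[OF f, of "take k w"] that \<open>k \<le> length w\<close> by auto
    ultimately show ?thesis by (auto simp: w_def)
  qed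
  then have "twisted_commutator q f g w
      = (\<Sum>k\<le>length w. if k = length u1 then q u1 u2 * (f u1 * g u2) else 0)"
    unfolding twisted_commutator_def by (intro sum.cong) auto
  also have "\<dots> = q u1 u2 * (f u1 * g u2)" by (simp add: w_def)
  finally show ?thesis by (simp only: w_def)
qed

lemma leading_word_twisted_commutator:
  fixes q :: "nat list \<Rightarrow> nat list \<Rightarrow> 'a::idom"
  assumes "q u1 u2 \<noteq> 0" and f: "leading_word f u1" and g: "leading_word g u2"
    and lt: "u1 @ u2 < u2 @ u1"
  shows "leading_word (twisted_commutator q f g) (u1 @ u2)"
  unfolding leading_word_def
proof (rule conjI; (intro allI impI)?)
  have "f u1 \<noteq> 0" "g u2 \<noteq> 0" using f g unfolding leading_word_def by auto
  then show "twisted_commutator q f g (u1 @ u2) \<noteq> 0"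
    using assms(1) twisted_commutator_at_leading_word[OF f g lt] by simp
next
  fix w assume "twisted_commutator q f g w \<noteq> 0"
  then obtain a b where "w = a @ b" "f a * g b \<noteq> 0 \<or> g a * f b \<noteq> 0"
    by (rule twisted_commutator_nonzeroE)
  then show "mset w = mset (u1 @ u2) \<and> u1 @ u2 \<le> w"
  proof (elim conjE disjE)
    assume "f a * g b \<noteq> 0"
    then show ?thesis using leading_word_append_le[OF f g, of a b] \<open>w = a @ b\<close> by simp
  next
    assume "g a * f b \<noteq> 0"
    then have "mset w = mset (u2 @ u1)" "u2 @ u1 \<le> w"
      using leading_word_append_le[OF g f, of a b] \<open>w = a @ b\<close> by simp_all
    then show ?thesis using lt by (simp add: add.commute)
  qed
qed

lemma lyndon_leading_word_in_lie_closure: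
  fixes q :: "nat list \<Rightarrow> nat list \<Rightarrow> 'a::field"
  assumes q: "\<And>a b. set a \<subseteq> {..<n} \<Longrightarrow> set b \<subseteq> {..<n} \<Longrightarrow> q a b \<noteq> 0"
    and "lyndon u" "set u \<subseteq> {..<n}"
  shows "\<exists>f \<in> lie_closure (twisted_commutator q) n. leading_word f u"
  using assms(2,3)
proof (induction "length u" arbitrary: u rule: less_induct)
  case less
  show ?case
  proof (cases "2 \<le> length u")
    case True
    then obtain w v where u: "u = w @ v" and "lyndon w" "lyndon v"
      using lyndon_standard_factorization less.prems(1) by blast
    then have ne: "w \<noteq> []" "v \<noteq> []" by (auto simp: lyndon_def)
    obtain f where f: "f \<in> lie_closure (twisted_commutator q) n" "leading_word f w"
      using less.hyps[of w] \<open>lyndon w\<close> ne less.prems(2) u by auto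
    obtain g where g: "g \<in> lie_closure (twisted_commutator q) n" "leading_word g v"
      using less.hyps[of v] \<open>lyndon v\<close> ne less.prems(2) u by auto
    have "leading_word (twisted_commutator q f g) u"
      using leading_word_twisted_commutator[OF q f(2) g(2)] lyndon_less_rotation less.prems u ne
      by simp
    then show ?thesis using lie_closure.br[OF f(1) g(1)] by blast
  next
    case False
    then obtain i where u: "u = [i]" using less.prems(1) unfolding lyndon_def
      by (metis One_nat_def length_0_conv length_Suc_conv less_2_cases not_le)
    then have "word [i] \<in> lie_closure (twisted_commutator q) n"
      using less.prems(2) by (simp add: lie_closure.gen)
    moreover have "leading_word (word [i] :: 'a tens) u" unfolding u leading_word_def word_def by simp
    ultimately show ?thesis by blast
  qed
qed

lemma image_mset_nth_permutes:
  "s permutes {0..<length w} \<Longrightarrow> image_mset (\<lambda>a. w ! s a) (mset_set {0..<length w}) = mset w"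
  using mset_permute_list[of s w] by (simp add: permute_list_def atLeast0LessThan)

lemma symm_mset_component:
  "symm p (\<lambda>w. if mset w = M then f w else 0) w' = (if mset w' = M then symm p f w' else 0)"
  unfolding symm_def by (auto intro!: sum.cong simp: image_mset_nth_permutes)

lemma symm_smult: "symm p (\<lambda>w. c * f w) w' = c * symm p f w'"
  unfolding symm_def by (simp add: sum_distrib_left mult.assoc)

lemma nichols_ideal_mset_component:
  assumes "h \<in> nichols_ideal n p"
  shows "(\<lambda>w. if mset w = M then h w else 0) \<in> nichols_ideal n p"
  using assms unfolding nichols_ideal_def tensor_elem_def
  by (auto intro: finite_subset[of _ "{w. h w \<noteq> 0}"] simp: symm_mset_component)

lemma nichols_ideal_smult:
  assumes "h \<in> nichols_ideal n p"
  shows "(\<lambda>w. c * h w) \<in> nichols_ideal n p"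
  using assms unfolding nichols_ideal_def tensor_elem_def
  by (auto intro: finite_subset[of _ "{w. h w \<noteq> 0}"] simp: symm_smult)

lemma not_standard_if_leading_word_in_nichols_ideal:
  assumes "f \<in> nichols_ideal n p" and f: "leading_word f u"
  shows "\<not> standard n p u"
proof -
  have "f u \<noteq> 0" using f by (simp add: leading_word_def)
  define c where "c w = - f w / f u" for w
  have "(\<lambda>w. word u w - (if mset w = mset u \<and> word_less u w then c w else 0))
      = (\<lambda>w. (1 / f u) * f w)"
  proof
    fix w
    show "word u w - (if mset w = mset u \<and> word_less u w then c w else 0) = (1 / f u) * f w"
    proof (cases "w = u")
      case True
      then show ?thesis using \<open>f u \<noteq> 0\<close> by (simp add: word_def word_less_iff_less)
    next
      case False
      have "f w = 0" if "\<not> (mset w = mset u \<and> u < w)"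
        using f that False unfolding leading_word_def by (metis order.not_eq_order_implies_strict)
      then show ?thesis using False by (auto simp: word_def word_less_iff_less c_def)
    qed
  qed
  then have "(\<lambda>w. word u w - (if mset w = mset u \<and> word_less u w then c w else 0))
      \<in> nichols_ideal n p"
    using nichols_ideal_smult[OF assms(1)] by (simp only:)
  then show ?thesis unfolding standard_def by blast
qed

lemma fin_dim_mod_homogeneous_in_nichols_ideal:
  assumes "fin_dim_mod n p S"
  obtains D where "finite D"
    and "\<And>f M. f \<in> S \<Longrightarrow> M \<notin> D \<Longrightarrow> (\<And>w. f w \<noteq> 0 \<Longrightarrow> mset w = M) \<Longrightarrow> f \<in> nichols_ideal n p"
proof -
  obtain gs where gs: "\<forall>g\<in>set gs. tensor_elem n g"
    and span: "\<forall>f\<in>S. \<exists>c. (\<lambda>w. f w - (\<Sum>j<length gs. c j * (gs ! j) w)) \<in> nichols_ideal n p"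
    using assms unfolding fin_dim_mod_def by blast
  define D where "D = (\<Union>g\<in>set gs. mset ` {w. g w \<noteq> 0})"
  have "finite D" unfolding D_def using gs by (simp add: tensor_elem_def)
  moreover have "f \<in> nichols_ideal n p"
    if "f \<in> S" "M \<notin> D" and hom: "\<And>w. f w \<noteq> 0 \<Longrightarrow> mset w = M" for f M
  proof -
    obtain c where "(\<lambda>w. f w - (\<Sum>j<length gs. c j * (gs ! j) w)) \<in> nichols_ideal n p"
      using span \<open>f \<in> S\<close> by blast
    then have "(\<lambda>w. if mset w = M then f w - (\<Sum>j<length gs. c j * (gs ! j) w) else 0)
        \<in> nichols_ideal n p"
      by (rule nichols_ideal_mset_component)
    moreover have gs_vanish: "(gs ! j) w = 0" if "j < length gs" "mset w = M" for j w
      using \<open>M \<notin> D\<close> that unfolding D_def by (auto dest: nth_mem)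
    moreover have "(\<lambda>w. if mset w = M then f w - (\<Sum>j<length gs. c j * (gs ! j) w) else 0) = f"
    proof
      fix w
      show "(if mset w = M then f w - (\<Sum>j<length gs. c j * (gs ! j) w) else 0) = f w"
        using hom gs_vanish by (cases "mset w = M") auto
    qed
    ultimately show ?thesis by simp
  qed
  ultimately show thesis using that by blast
qed

lemma lie_closure_twisted_commutator_not_fin_dim_mod:
  fixes p :: "nat \<Rightarrow> nat \<Rightarrow> 'a::field"
  assumes q: "\<And>a b. set a \<subseteq> {..<n} \<Longrightarrow> set b \<subseteq> {..<n} \<Longrightarrow> q a b \<noteq> 0"
    and "infinite (Delta_plus n p)"
  shows "\<not> fin_dim_mod n p (lie_closure (twisted_commutator q) n)"
proof
  assume "fin_dim_mod n p (lie_closure (twisted_commutator q) n)"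
  then obtain D :: "nat multiset set" where "finite D" and homogeneous_in_ideal:
    "\<And>f M. f \<in> lie_closure (twisted_commutator q) n \<Longrightarrow> M \<notin> D \<Longrightarrow>
       (\<And>w. f w \<noteq> 0 \<Longrightarrow> mset w = M) \<Longrightarrow> f \<in> nichols_ideal n p"
    by (rule fin_dim_mod_homogeneous_in_nichols_ideal) blast
  have "infinite (Delta_plus n p - (\<lambda>M i. int (count M i)) ` D)"
    using assms(2) \<open>finite D\<close> by (simp add: Diff_infinite_finite)
  then obtain d where "d \<in> Delta_plus n p" "d \<notin> (\<lambda>M i. int (count M i)) ` D"
    by (metis Diff_iff finite.emptyI ex_in_conv)
  then obtain u where "d = deg u" "set u \<subseteq> {..<n}" "lyndon u" "standard n p u"
    unfolding Delta_plus_def by blast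
  with \<open>d \<notin> (\<lambda>M i. int (count M i)) ` D\<close> have "mset u \<notin> D"
    unfolding deg_def by blast
  obtain f where f: "f \<in> lie_closure (twisted_commutator q) n" "leading_word f u"
    using lyndon_leading_word_in_lie_closure[where q = q, OF q \<open>lyndon u\<close> \<open>set u \<subseteq> {..<n}\<close>]
    by blast
  have "mset w = mset u" if "f w \<noteq> 0" for w
    using f(2) that unfolding leading_word_def by blast
  then have "f \<in> nichols_ideal n p" using homogeneous_in_ideal[OF f(1) \<open>mset u \<notin> D\<close>] by blast
  then show False
    using not_standard_if_leading_word_in_nichols_ideal f(2) \<open>standard n p u\<close> by blast
qed

theorem theorem6p4:
  fixes n :: nat and p :: "nat \<Rightarrow> nat \<Rightarrow> 'a::field_char_0"
  assumes "\<forall>i<n. \<forall>j<n. p i j \<noteq> 0"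
    and "infinite (Delta n p)"
  shows "\<not> fin_dim_mod n p (LieL n p) \<and> \<not> fin_dim_mod n p (LieR n p)"
proof -
  have Delta_plus: "infinite (Delta_plus n p)" using assms(2) unfolding Delta_def by auto
  have pw: "\<And>a b. set a \<subseteq> {..<n} \<Longrightarrow> set b \<subseteq> {..<n} \<Longrightarrow> pw p a b \<noteq> 0"
    using pw_nonzero[OF assms(1)] by blast
  show ?thesis
    unfolding LieL_def LieR_def bracketL_eq_twisted_commutator bracketR_eq_twisted_commutator
    using lie_closure_twisted_commutator_not_fin_dim_mod[where q = "\<lambda>a b. pw p b a", OF pw Delta_plus]
      lie_closure_twisted_commutator_not_fin_dim_mod[where q = "pw p", OF pw Delta_plus]
    by blast
qed

end
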